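(* Let $\mathcal R=\langle \mathbf G_o,\mathbf G_{in},\mathbf c_o,\mathbf c_{in},\mathcal P_o,\mathcal P_{in},\mathbf r,\mathbf A_o,\mathbf A_{in},\mathbf b_o,\mathbf b_{in}\rangle\subseteq\mathbb R^n$ be an RCG with $\mathbf G_o\in\mathbb R^{n\times p}$, and let $\mathcal{CG}=\langle \mathbf c_{\text{ccg}},\mathbf G_{\text{ccg}},\mathcal J_{\text{ccg}},\mathcal P_{\text{ccg}},\mathbf A_{\text{ccg}},\mathbf b_{\text{ccg}}\rangle\subseteq\mathbb R^n$ be a CCG with partition $\{\mathcal L_1,\dots,\mathcal L_{k_{\text{ccg}}}\}$ and norms $\{s_1,\dots,s_{k_{\text{ccg}}}\}$. Set $\tilde{\boldsymbol\beta}=[\boldsymbol\beta^T\ \boldsymbol\gamma^T]^T$, $\Pi_\beta=[I_p\ \ 0]$, $\tilde{\mathbf G}=[\mathbf G_o\ \ \mathbf 0]$, $$\tilde{\mathbf A}=\begin{bmatrix}\mathbf A_o&\mathbf 0\\ \mathbf 0&\mathbf A_{\text{ccg}}\\ \mathbf G_o&-\mathbf G_{\text{ccg}}\end{bmatrix},\qquad \tilde{\mathbf b}=\begin{bmatrix}\mathbf b_o\\ \mathbf b_{\text{ccg}}\\ \mathbf c_{\text{ccg}}-\mathbf c_o\end{bmatrix}.$$ Then $$\mathcal R\cap\mathcal{CG}=\Bigl\{\mathbf c_o+\tilde{\mathbf G}\tilde{\boldsymbol\beta}\ \Big|\ \|\boldsymbol\beta_{\mathcal J_i}\|_{p_i}\le1\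 (i=1,\dots,k_o),\ \|\boldsymbol\gamma_{\mathcal L_j}\|_{s_j}\le1\ (j=1,\dots,k_{\text{ccg}}),\ \tilde{\mathbf A}\tilde{\boldsymbol\beta}=\tilde{\mathbf b},$$ $$\nexists\boldsymbol\eta:\ \mathbf G_{in}\boldsymbol\eta=(\mathbf c_o-\mathbf c_{in})+\mathbf G_o\Pi_\beta\tilde{\boldsymbol\beta},\ \|\boldsymbol\eta_{\mathcal K_l}\|_{q_l}\le r_l\ (l=1,\dots,k_{in}),\ \mathbf A_{in}\boldsymbol\eta=\mathbf b_{in}\Bigr\},$$ so in particular $\mathcal R\cap\mathcal{CG}$ is again of RCG form.
   Context: A CCG $\langle \mathbf c,\mathbf G,\mathcal J,\mathcal P,\mathbf A,\mathbf b\rangle$ with $\mathbf G\in\mathbb R^{n\times m}$, $\mathcal J=\{\mathcal J_1,\dots,\mathcal J_k\}$ a partition of $\{1,\dots,m\}$, $\mathcal P=\{p_1,\dots,p_k\}\subset[1,\infty]$, is the set $\{\mathbf c+\mathbf G\boldsymbol\beta:\|\boldsymbol\beta_{\mathcal J_i}\|_{p_i}\le1\ \forall i,\ \mathbf A\boldsymbol\beta=\mathbf b\}$ ($\boldsymbol\beta_{\mathcal J}$ the subvector indexed by $\mathcal J$). An RCG $\langle \mathbf G_o,\mathbf G_{in},\mathbf c_o,\mathbf c_{in},\mathcal P_o,\mathcal P_{in},\mathbf r,\mathbf A_o,\mathbf A_{in},\mathbf b_o,\mathbf b_{in}\rangle$ is the set $\mathcal{CG}_{\text{outer}}\setminus\mathcal{CG}_{\text{inner}}$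 with $\mathcal{CG}_{\text{outer}}=\{\mathbf c_o+\mathbf G_o\boldsymbol\beta:\|\boldsymbol\beta_{\mathcal J_i}\|_{p_i}\le1\ (i=1,\dots,k_o),\ \mathbf A_o\boldsymbol\beta=\mathbf b_o\}$ and $\mathcal{CG}_{\text{inner}}=\{\mathbf c_{in}+\mathbf G_{in}\boldsymbol\eta:\|\boldsymbol\eta_{\mathcal K_j}\|_{q_j}\le r_j\ (j=1,\dots,k_{in}),\ \mathbf A_{in}\boldsymbol\eta=\mathbf b_{in}\}$, where $\{\mathcal J_i\}$, $\{\mathcal K_j\}$ are partitions of the respective generator index sets, $\mathcal P_o=\{p_i\}$, $\mathcal P_{in}=\{q_j\}\subset[1,\infty]$, and $\mathbf r=(r_j)$ with $r_j\in[0,1)$. *)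

theory Defs
  imports "HOL-Analysis.Analysis"
begin

text \<open>Vectors in R^n are rendered as real^'n with finite index types; an
n x m matrix is real^'m^'n.\<close>

definition is_partition :: "('k \<Rightarrow> 'm set) \<Rightarrow> bool" where
  "is_partition J \<longleftrightarrow> (\<forall>i. J i \<noteq> {}) \<and> (\<forall>i j. i \<noteq> j \<longrightarrow> J i \<inter> J j = {})
     \<and> (\<Union>i. J i) = UNIV"

definition blocknorm :: "ereal \<Rightarrow> 'm::finite set \<Rightarrow> real^'m \<Rightarrow> real" where
  "blocknorm p J x =
     (if p = \<infinity> then (if J = {} then 0 else Max ((\<lambda>j. \<bar>x $ j\<bar>) ` J))
      else (\<Sum>j\<in>J. \<bar>x $ j\<bar> powr real_of_ereal p) powr (1 / real_of_ereal p))"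

definition cg_radii ::
  "real^'n \<Rightarrow> real^'m::finite^'n::finite \<Rightarrow> ('k \<Rightarrow> 'm set) \<Rightarrow> ('k \<Rightarrow> ereal)
   \<Rightarrow> ('k \<Rightarrow> real) \<Rightarrow> real^'m^'a::finite \<Rightarrow> real^'a \<Rightarrow> (real^'n) set" where
  "cg_radii c G J P r A b =
     {c + G *v \<beta> | \<beta>. (\<forall>i. blocknorm (P i) (J i) \<beta> \<le> r i) \<and> A *v \<beta> = b}"

definition ccg_set ::
  "real^'n \<Rightarrow> real^'m::finite^'n::finite \<Rightarrow> ('k \<Rightarrow> 'm set) \<Rightarrow> ('k \<Rightarrow> ereal)
   \<Rightarrow> real^'m^'a::finite \<Rightarrow> real^'a \<Rightarrow> (real^'n) set" where
  "ccg_set c G J P A b = cg_radii c G J P (\<lambda>_. 1) A b"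

definition rcg_set ::
  "real^'p::finite^'n::finite \<Rightarrow> real^'q::finite^'n \<Rightarrow> real^'n \<Rightarrow> real^'n
   \<Rightarrow> ('ko \<Rightarrow> 'p set) \<Rightarrow> ('ko \<Rightarrow> ereal) \<Rightarrow> ('ki \<Rightarrow> 'q set) \<Rightarrow> ('ki \<Rightarrow> ereal)
   \<Rightarrow> ('ki \<Rightarrow> real) \<Rightarrow> real^'p^'a::finite \<Rightarrow> real^'q^'c::finite \<Rightarrow> real^'a \<Rightarrow> real^'c
   \<Rightarrow> (real^'n) set" where
  "rcg_set Go Gin co cin Jo Po Kin Qin r Ao Ain bo bin =
     ccg_set co Go Jo Po Ao bo - cg_radii cin Gin Kin Qin r Ain bin"

definition Pi_beta :: "real^('p::finite + 'm::finite)^'p" where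
  "Pi_beta = (\<chi> i j. if j = Inl i then 1 else 0)"

definition Pi_gamma :: "real^('p::finite + 'm::finite)^'m" where
  "Pi_gamma = (\<chi> i j. if j = Inr i then 1 else 0)"

definition G_tilde :: "real^'p::finite^'n::finite \<Rightarrow> real^('p + 'm::finite)^'n" where
  "G_tilde Go = (\<chi> i j. case j of Inl k \<Rightarrow> Go $ i $ k | Inr _ \<Rightarrow> 0)"

definition A_tilde ::
  "real^'p::finite^'a::finite \<Rightarrow> real^'m::finite^'e::finite \<Rightarrow> real^'p^'n::finite
   \<Rightarrow> real^'m^'n \<Rightarrow> real^('p + 'm)^('a + ('e + 'n))" where
  "A_tilde Ao Accg Go Gccg = (\<chi> i j.
     case i of
       Inl r \<Rightarrow> (case j of Inl k \<Rightarrow> Ao $ r $ k | Inr _ \<Rightarrow> 0)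
     | Inr (Inl r) \<Rightarrow> (case j of Inl _ \<Rightarrow> 0 | Inr k \<Rightarrow> Accg $ r $ k)
     | Inr (Inr r) \<Rightarrow> (case j of Inl k \<Rightarrow> Go $ r $ k | Inr k \<Rightarrow> - (Gccg $ r $ k)))"

definition b_tilde ::
  "real^'a::finite \<Rightarrow> real^'e::finite \<Rightarrow> real^'n::finite \<Rightarrow> real^'n \<Rightarrow> real^('a + ('e + 'n))" where
  "b_tilde bo bccg cccg co = (\<chi> i.
     case i of Inl r \<Rightarrow> bo $ r | Inr (Inl r) \<Rightarrow> bccg $ r | Inr (Inr r) \<Rightarrow> (cccg - co) $ r)"

definition J_tilde :: "('ko \<Rightarrow> 'p set) \<Rightarrow> ('kc \<Rightarrow> 'm set) \<Rightarrow> ('ko + 'kc) \<Rightarrow> ('p + 'm) set" where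
  "J_tilde J L i = (case i of Inl a \<Rightarrow> Inl ` J a | Inr c \<Rightarrow> Inr ` L c)"

definition P_tilde :: "('ko \<Rightarrow> ereal) \<Rightarrow> ('kc \<Rightarrow> ereal) \<Rightarrow> ('ko + 'kc) \<Rightarrow> ereal" where
  "P_tilde P S i = (case i of Inl a \<Rightarrow> P a | Inr c \<Rightarrow> S c)"

end

theory Submission
  imports Defs
begin

text \<open>A point lies in both CCGs iff it is \<open>c_o + G_o \<beta>\<close> and \<open>c_ccg + G_ccg \<gamma>\<close> for admissible
  \<open>\<beta>\<close>, \<open>\<gamma>\<close>; equating the two representations is the linear constraint
  \<open>G_o \<beta> - G_ccg \<gamma> = c_ccg - c_o\<close>, so the intersection is the CCG in the stacked variable
  \<open>(\<beta>, \<gamma>)\<close>. Since \<open>(O - I) \<inter> C = (O \<inter> C) - I\<close>, intersecting an RCG with a CCG only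
  replaces its outer CCG.\<close>

lemma sum_UNIV_Plus:
  "(\<Sum>j\<in>UNIV. f j) = (\<Sum>i\<in>UNIV. f (Inl i)) + (\<Sum>k\<in>UNIV. f (Inr k))"
  for f :: "'a::finite + 'b::finite \<Rightarrow> 'c::comm_monoid_add"
  by (metis UNIV_Plus_UNIV finite sum.Plus comp_apply sum.cong)

lemma Pi_beta_mult_vec: "Pi_beta *v bt = (\<chi> i. bt $ Inl i)"
  by (simp add: vec_eq_iff matrix_vector_mult_def Pi_beta_def sum_UNIV_Plus
      of_bool_def [symmetric])

lemma Pi_gamma_mult_vec: "Pi_gamma *v bt = (\<chi> i. bt $ Inr i)"
  by (simp add: vec_eq_iff matrix_vector_mult_def Pi_gamma_def sum_UNIV_Plus
      of_bool_def [symmetric])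

lemma Pi_beta_Pi_gamma_surj:
  "\<exists>bt :: real^('p::finite + 'm::finite). Pi_beta *v bt = \<beta> \<and> Pi_gamma *v bt = \<gamma>"
  by (rule exI[of _ "\<chi> j. case_sum (($) \<beta>) (($) \<gamma>) j"])
     (simp add: Pi_beta_mult_vec Pi_gamma_mult_vec vec_eq_iff)

lemma G_tilde_mult_vec: "G_tilde Go *v bt = Go *v (Pi_beta *v bt)"
  unfolding Pi_beta_mult_vec
  by (simp add: vec_eq_iff matrix_vector_mult_def G_tilde_def sum_UNIV_Plus)

lemma A_tilde_mult_vec_eq_b_tilde:
  "A_tilde Ao Accg Go Gccg *v bt = b_tilde bo bccg cccg co \<longleftrightarrow>
     Ao *v (Pi_beta *v bt) = bo \<and> Accg *v (Pi_gamma *v bt) = bccg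
     \<and> Go *v (Pi_beta *v bt) - Gccg *v (Pi_gamma *v bt) = cccg - co"
  unfolding Pi_beta_mult_vec Pi_gamma_mult_vec vec_eq_iff split_sum_all
  by (simp add: matrix_vector_mult_def A_tilde_def b_tilde_def sum_UNIV_Plus
      sum_negf sum_subtractf)

lemma blocknorm_image_Inl: "blocknorm p (Inl ` J) bt = blocknorm p J (Pi_beta *v bt)"
  by (simp add: blocknorm_def Pi_beta_mult_vec sum.reindex image_image)

lemma blocknorm_image_Inr: "blocknorm p (Inr ` J) bt = blocknorm p J (Pi_gamma *v bt)"
  by (simp add: blocknorm_def Pi_gamma_mult_vec sum.reindex image_image)

lemma blocknorm_J_tilde_le_1_iff:
  "(\<forall>i. blocknorm (P_tilde Po S i) (J_tilde Jo L i) bt \<le> 1) \<longleftrightarrow>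
     (\<forall>i. blocknorm (Po i) (Jo i) (Pi_beta *v bt) \<le> 1)
     \<and> (\<forall>j. blocknorm (S j) (L j) (Pi_gamma *v bt) \<le> 1)"
  unfolding split_sum_all
  by (simp add: P_tilde_def J_tilde_def blocknorm_image_Inl blocknorm_image_Inr)

lemma ccg_set_stacked_eq:
  fixes Go :: "real^'p::finite^'n::finite" and Gccg :: "real^'m::finite^'n"
  shows "ccg_set co (G_tilde Go) (J_tilde Jo L) (P_tilde Po S)
       (A_tilde Ao Accg Go Gccg) (b_tilde bo bccg cccg co) =
     {co + Go *v \<beta> | \<beta> \<gamma>. (\<forall>i. blocknorm (Po i) (Jo i) \<beta> \<le> 1)
        \<and> (\<forall>j. blocknorm (S j) (L j) \<gamma> \<le> 1)
        \<and> Ao *v \<beta> = bo \<and> Accg *v \<gamma> = bccg \<and> Go *v \<beta> - Gccg *v \<gamma> = cccg - co}"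
  (is "?lhs = ?rhs")
proof
  show "?lhs \<subseteq> ?rhs"
    unfolding ccg_set_def cg_radii_def blocknorm_J_tilde_le_1_iff
      A_tilde_mult_vec_eq_b_tilde G_tilde_mult_vec
    by blast
  show "?rhs \<subseteq> ?lhs"
  proof
    fix x assume "x \<in> ?rhs"
    then obtain \<beta> \<gamma> where "x = co + Go *v \<beta>" "\<forall>i. blocknorm (Po i) (Jo i) \<beta> \<le> 1"
      "\<forall>j. blocknorm (S j) (L j) \<gamma> \<le> 1" "Ao *v \<beta> = bo" "Accg *v \<gamma> = bccg"
      "Go *v \<beta> - Gccg *v \<gamma> = cccg - co"
      by blast
    moreover obtain bt :: "real^('p + 'm)" where "Pi_beta *v bt = \<beta>" "Pi_gamma *v bt = \<gamma>"
      using Pi_beta_Pi_gamma_surj by blast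
    ultimately show "x \<in> ?lhs"
      unfolding ccg_set_def cg_radii_def blocknorm_J_tilde_le_1_iff
        A_tilde_mult_vec_eq_b_tilde G_tilde_mult_vec
      by blast
  qed
qed

lemma ccg_set_Int_ccg_set:
  "ccg_set co Go Jo Po Ao bo \<inter> ccg_set cccg Gccg L S Accg bccg =
     ccg_set co (G_tilde Go) (J_tilde Jo L) (P_tilde Po S)
       (A_tilde Ao Accg Go Gccg) (b_tilde bo bccg cccg co)"
proof -
  have "co + Go *v \<beta> = cccg + Gccg *v \<gamma> \<longleftrightarrow> Go *v \<beta> - Gccg *v \<gamma> = cccg - co"
    for \<beta> \<gamma>
    by (auto simp: algebra_simps)
  then show ?thesis
    unfolding ccg_set_stacked_eq unfolding ccg_set_def cg_radii_def by blast
qed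

lemma rcg_set_Int_ccg_set:
  "rcg_set Go Gin co cin Jo Po Kin Qin r Ao Ain bo bin \<inter> ccg_set cccg Gccg L S Accg bccg
     = rcg_set (G_tilde Go) Gin co cin (J_tilde Jo L) (P_tilde Po S)
         Kin Qin r (A_tilde Ao Accg Go Gccg) Ain (b_tilde bo bccg cccg co) bin"
  unfolding rcg_set_def ccg_set_Int_ccg_set [symmetric] by blast

lemma mem_cg_radii_iff:
  "x \<in> cg_radii c G J P r A b \<longleftrightarrow>
     (\<exists>\<eta>. G *v \<eta> = x - c \<and> (\<forall>i. blocknorm (P i) (J i) \<eta> \<le> r i) \<and> A *v \<eta> = b)"
  unfolding cg_radii_def by (auto simp: algebra_simps)

lemma rcg_set_eq:
  "rcg_set Go Gin co cin Jo Po Kin Qin r Ao Ain bo bin =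
     {co + Go *v \<beta> | \<beta>. (\<forall>i. blocknorm (Po i) (Jo i) \<beta> \<le> 1) \<and> Ao *v \<beta> = bo
        \<and> \<not> (\<exists>\<eta>. Gin *v \<eta> = (co - cin) + Go *v \<beta>
                \<and> (\<forall>l. blocknorm (Qin l) (Kin l) \<eta> \<le> r l) \<and> Ain *v \<eta> = bin)}"
  unfolding rcg_set_def ccg_set_def set_diff_eq
  unfolding cg_radii_def [of co] mem_cg_radii_iff
  by (auto simp: algebra_simps)

theorem proposition5:
  fixes Go :: "real^'p::finite^'n::finite" and Gin :: "real^'q::finite^'n"
    and co cin :: "real^'n"
    and Jo :: "'ko::finite \<Rightarrow> 'p set" and Po :: "'ko \<Rightarrow> ereal"
    and Kin :: "'ki::finite \<Rightarrow> 'q set" and Qin :: "'ki \<Rightarrow> ereal" and r :: "'ki \<Rightarrow> real"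
    and Ao :: "real^'p^'a::finite" and bo :: "real^'a"
    and Ain :: "real^'q^'c::finite" and bin :: "real^'c"
    and cccg :: "real^'n" and Gccg :: "real^'m::finite^'n"
    and L :: "'kc::finite \<Rightarrow> 'm set" and S :: "'kc \<Rightarrow> ereal"
    and Accg :: "real^'m^'e::finite" and bccg :: "real^'e"
  assumes "is_partition Jo" and "\<forall>i. 1 \<le> Po i"
    and "is_partition Kin" and "\<forall>l. 1 \<le> Qin l"
    and "\<forall>l. 0 \<le> r l \<and> r l < 1"
    and "is_partition L" and "\<forall>j. 1 \<le> S j"
  shows "rcg_set Go Gin co cin Jo Po Kin Qin r Ao Ain bo bin \<inter> ccg_set cccg Gccg L S Accg bccg
       = {co + (G_tilde Go :: real^('p + 'm)^'n) *v bt | bt.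
            (\<forall>i. blocknorm (Po i) (Jo i) (Pi_beta *v bt) \<le> 1)
          \<and> (\<forall>j. blocknorm (S j) (L j) (Pi_gamma *v bt) \<le> 1)
          \<and> A_tilde Ao Accg Go Gccg *v bt = b_tilde bo bccg cccg co
          \<and> \<not> (\<exists>\<eta>. Gin *v \<eta> = (co - cin) + Go *v (Pi_beta *v bt)
                  \<and> (\<forall>l. blocknorm (Qin l) (Kin l) \<eta> \<le> r l) \<and> Ain *v \<eta> = bin)}
     \<and> rcg_set Go Gin co cin Jo Po Kin Qin r Ao Ain bo bin \<inter> ccg_set cccg Gccg L S Accg bccg
       = rcg_set (G_tilde Go :: real^('p + 'm)^'n) Gin co cin (J_tilde Jo L) (P_tilde Po S)
           Kin Qin r (A_tilde Ao Accg Go Gccg) Ain (b_tilde bo bccg cccg co) bin"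
proof -
  have "rcg_set (G_tilde Go :: real^('p + 'm)^'n) Gin co cin (J_tilde Jo L) (P_tilde Po S)
           Kin Qin r (A_tilde Ao Accg Go Gccg) Ain (b_tilde bo bccg cccg co) bin
       = {co + (G_tilde Go :: real^('p + 'm)^'n) *v bt | bt.
            (\<forall>i. blocknorm (Po i) (Jo i) (Pi_beta *v bt) \<le> 1)
          \<and> (\<forall>j. blocknorm (S j) (L j) (Pi_gamma *v bt) \<le> 1)
          \<and> A_tilde Ao Accg Go Gccg *v bt = b_tilde bo bccg cccg co
          \<and> \<not> (\<exists>\<eta>. Gin *v \<eta> = (co - cin) + Go *v (Pi_beta *v bt)
                  \<and> (\<forall>l. blocknorm (Qin l) (Kin l) \<eta> \<le> r l) \<and> Ain *v \<eta> = bin)}"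
    unfolding rcg_set_eq blocknorm_J_tilde_le_1_iff G_tilde_mult_vec by simp
  then show ?thesis
    unfolding rcg_set_Int_ccg_set by simp
qed

end
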